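(* Let $\mathbf{A}\in\mathbb{R}^{n\times n}$ be symmetric positive definite, and let $\mathbf{A}_\ell=\mathbf{A}+\sum_{k=1}^{\ell}\mathbf{P}_k\mathbf{E}_k\mathbf{P}_k$, where each $\mathbf{E}_k\in\mathbb{R}^{n\times n}$ is symmetric and each $\mathbf{P}_k$ is an orthogonal projection matrix. Suppose $$\sum_{k=1}^{\ell}\|\mathbf{E}_k\|_2\,\|\mathbf{P}_k\mathbf{A}^{-1}\mathbf{P}_k\|_2\le\mu<1.$$ Then $\mathbf{A}_\ell$ is symmetric positive definite and the condition number satisfies $$\kappa\!\left(\mathbf{A}_\ell^{-1/2}\mathbf{A}\,\mathbf{A}_\ell^{-1/2}\right)\le\frac{1+\mu}{1-\mu}.$$
   Context: For an SPD matrix $\mathbf{X}=\mathbf{V}\mathbf{\Lambda}\mathbf{V}^T$ (eigendecomposition), $\mathbf{X}^{1/2}=\mathbf{V}\mathbf{\Lambda}^{1/2}\mathbf{V}^T$ and $\mathbf{X}^{-1/2}$ is its inverse; $\kappa$ denotes the 2-norm condition number (ratio of largest to smallest eigenvalue for an SPD matrix). *)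

theory Defs
  imports "HOL-Analysis.Analysis"
begin

text \<open>Real n x n matrices are modelled as real^'n^'n (dimension n = CARD('n)).\<close>

definition symmetric_matrix :: "real^'n^'n \<Rightarrow> bool" where
  "symmetric_matrix A \<longleftrightarrow> transpose A = A"

definition spd :: "real^'n^'n \<Rightarrow> bool" where
  "spd A \<longleftrightarrow> symmetric_matrix A \<and> (\<forall>x. x \<noteq> 0 \<longrightarrow> x \<bullet> (A *v x) > 0)"

definition orth_proj :: "real^'n^'n \<Rightarrow> bool" where
  "orth_proj P \<longleftrightarrow> transpose P = P \<and> P ** P = P"

definition norm2 :: "real^'n^'n \<Rightarrow> real" where
  "norm2 A = onorm (\<lambda>x. A *v x)"

text \<open>Principal square root of an SPD matrix: the unique SPD matrix S with S S = X
  (equivalently V Lambda^(1/2) V^T for an eigendecomposition X = V Lambda V^T).\<close>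
definition mat_sqrt :: "real^'n^'n \<Rightarrow> real^'n^'n" where
  "mat_sqrt X = (THE S. spd S \<and> S ** S = X)"

definition mat_inv_sqrt :: "real^'n^'n \<Rightarrow> real^'n^'n" where
  "mat_inv_sqrt X = matrix_inv (mat_sqrt X)"

definition cond2 :: "real^'n^'n \<Rightarrow> real" where
  "cond2 M = norm2 M * norm2 (matrix_inv M)"

end

theory Submission
  imports Defs
begin

text \<open>Write \<open>A\<^sub>\<ell> = A + D\<close> with \<open>D = \<Sum>\<^sub>k P\<^sub>k E\<^sub>k P\<^sub>k\<close>. Each summand satisfies
  \<open>|x\<bullet>P E P x| \<le> \<parallel>E\<parallel> |P x|\<^sup>2\<close>, and Cauchy--Schwarz in the \<open>A\<close>-inner product gives
  \<open>|P x|\<^sup>2 \<le> \<parallel>P A\<^sup>-\<^sup>1 P\<parallel> (x\<bullet>A x)\<close>. Hence \<open>|x\<bullet>D x| \<le> \<mu> (x\<bullet>A x)\<close>, i.e.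
  \<open>(1 - \<mu>) A \<le> A\<^sub>\<ell> \<le> (1 + \<mu>) A\<close> in the Loewner order, so \<open>A\<^sub>\<ell>\<close> is positive definite.
  Substituting \<open>x = A\<^sub>\<ell>\<^sup>-\<^sup>1\<^sup>/\<^sup>2 y\<close> shows that the Rayleigh quotients of
  \<open>M = A\<^sub>\<ell>\<^sup>-\<^sup>1\<^sup>/\<^sup>2 A A\<^sub>\<ell>\<^sup>-\<^sup>1\<^sup>/\<^sup>2\<close> lie in \<open>[1/(1 + \<mu>), 1/(1 - \<mu>)]\<close>, which bounds
  \<open>\<parallel>M\<parallel>\<close> by \<open>1/(1 - \<mu>)\<close> and \<open>\<parallel>M\<^sup>-\<^sup>1\<parallel>\<close> by \<open>1 + \<mu>\<close>. The square root exists and is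
  unique by the spectral theorem, obtained by maximising the Rayleigh quotient on invariant
  subspaces.\<close>

section \<open>Quadratic forms of symmetric matrices\<close>

lemma symmetric_matrix_inner:
  fixes A :: "real^'n^'n"
  assumes "symmetric_matrix A"
  shows "x \<bullet> (A *v y) = (A *v x) \<bullet> y"
  by (metis assms dot_lmul_matrix symmetric_matrix_def transpose_matrix_vector)

lemma symmetric_matrix_add:
  fixes A B :: "real^'n^'n"
  assumes "symmetric_matrix A" "symmetric_matrix B"
  shows "symmetric_matrix (A + B)"
  using assms unfolding symmetric_matrix_def by (simp add: transpose_def vec_eq_iff)

lemma symmetric_matrix_sum:
  fixes f :: "'a \<Rightarrow> real^'n^'n"
  assumes "\<And>k. k \<in> K \<Longrightarrow> symmetric_matrix (f k)"
  shows "symmetric_matrix (\<Sum>k\<in>K. f k)"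
  using assms
proof (induction K rule: infinite_finite_induct)
  case (infinite K)
  then show ?case by (simp add: symmetric_matrix_def transpose_def vec_eq_iff)
next
  case empty
  then show ?case by (simp add: symmetric_matrix_def transpose_def vec_eq_iff)
next
  case (insert k K)
  then show ?case by (simp add: symmetric_matrix_add)
qed

lemma symmetric_matrix_sandwich:
  fixes P E :: "real^'n^'n"
  assumes "symmetric_matrix P" "symmetric_matrix E"
  shows "symmetric_matrix (P ** E ** P)"
  using assms unfolding symmetric_matrix_def by (simp add: matrix_transpose_mul matrix_mul_assoc)

lemma quadform_sandwich:
  fixes R A :: "real^'n^'n"
  assumes "symmetric_matrix R"
  shows "x \<bullet> ((R ** A ** R) *v x) = (R *v x) \<bullet> (A *v (R *v x))"
  using symmetric_matrix_inner[OF assms, of x]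
  by (simp add: matrix_vector_mul_assoc[symmetric] matrix_mul_assoc[symmetric])

lemma sum_matrix_vector_mult:
  fixes f :: "'a \<Rightarrow> real^'n^'n"
  shows "(\<Sum>k\<in>K. f k) *v x = (\<Sum>k\<in>K. f k *v x)"
  by (induction K rule: infinite_finite_induct) (simp_all add: matrix_vector_mult_add_rdistrib)

lemma quadform_add_scaleR:
  fixes M :: "real^'n^'n"
  assumes "symmetric_matrix M"
  shows "(u + t *\<^sub>R z) \<bullet> (M *v (u + t *\<^sub>R z))
    = u \<bullet> (M *v u) + 2 * t * (u \<bullet> (M *v z)) + t * t * (z \<bullet> (M *v z))"
proof -
  have "z \<bullet> (M *v u) = u \<bullet> (M *v z)"
    using symmetric_matrix_inner[OF assms, of z u] by (simp add: inner_commute)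
  then show ?thesis
    by (simp add: matrix_vector_right_distrib matrix_vector_mult_scaleR inner_add_left
        inner_add_right algebra_simps)
qed

lemma quadform_Cauchy_Schwarz:
  fixes M :: "real^'n^'n"
  assumes sym: "symmetric_matrix M"
    and line: "\<And>t. 0 \<le> (u + t *\<^sub>R z) \<bullet> (M *v (u + t *\<^sub>R z))"
    and z: "0 \<le> z \<bullet> (M *v z)"
  shows "(u \<bullet> (M *v z))\<^sup>2 \<le> (u \<bullet> (M *v u)) * (z \<bullet> (M *v z))"
proof -
  define a where "a = u \<bullet> (M *v u)"
  define b where "b = u \<bullet> (M *v z)"
  define c where "c = z \<bullet> (M *v z)"
  have q: "0 \<le> a + 2 * t * b + t * t * c" for t
    using line[of t] quadform_add_scaleR[OF sym, of u t z] by (simp add: a_def b_def c_def)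
  have "b\<^sup>2 \<le> a * c"
  proof (cases "c = 0")
    case True
    have "b = 0"
    proof (rule ccontr)
      assume "b \<noteq> 0"
      have "0 \<le> a + 2 * (- (a + 1) / (2 * b)) * b" using q[of "- (a + 1) / (2 * b)"] True by simp
      also have "\<dots> = -1" using \<open>b \<noteq> 0\<close> by (simp add: field_simps)
      finally show False by simp
    qed
    then show ?thesis using True by simp
  next
    case False
    then have "c > 0" using z c_def by simp
    have "0 \<le> a + 2 * (- b / c) * b + (- b / c) * (- b / c) * c" by (rule q)
    also have "\<dots> = (a * c - b\<^sup>2) / c" using \<open>c > 0\<close> by (simp add: field_simps power2_eq_square)
    finally show ?thesis using \<open>c > 0\<close> by (simp add: zero_le_divide_iff)
  qed
  then show ?thesis by (simp add: a_def b_def c_def)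
qed

lemma spd_symmetric: "spd A \<Longrightarrow> symmetric_matrix A"
  by (simp add: spd_def)

lemma spd_quadform_pos: "spd A \<Longrightarrow> x \<noteq> 0 \<Longrightarrow> 0 < x \<bullet> (A *v x)"
  by (simp add: spd_def)

lemma spd_quadform_nonneg: "spd A \<Longrightarrow> 0 \<le> x \<bullet> (A *v x)"
  by (cases "x = 0") (auto dest: spd_quadform_pos)

lemma orth_proj_symmetric: "orth_proj P \<Longrightarrow> symmetric_matrix P"
  by (simp add: orth_proj_def symmetric_matrix_def)

lemma spd_Cauchy_Schwarz:
  fixes A :: "real^'n^'n"
  assumes "spd A"
  shows "(u \<bullet> (A *v z))\<^sup>2 \<le> (u \<bullet> (A *v u)) * (z \<bullet> (A *v z))"
  using assms by (intro quadform_Cauchy_Schwarz spd_symmetric spd_quadform_nonneg)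

lemma spd_if_quadform_ge:
  fixes A B :: "real^'n^'n"
  assumes A: "spd A" and B: "symmetric_matrix B" and a: "0 < a"
    and ge: "\<And>x. a * (x \<bullet> (A *v x)) \<le> x \<bullet> (B *v x)"
  shows "spd B"
  unfolding spd_def
proof (intro conjI B allI impI)
  fix x :: "real^'n" assume "x \<noteq> 0"
  then have "0 < a * (x \<bullet> (A *v x))" using a spd_quadform_pos[OF A] by simp
  then show "0 < x \<bullet> (B *v x)" using ge[of x] by linarith
qed

section \<open>Spectral norm and inverses\<close>

lemma norm2_nonneg: "0 \<le> norm2 (A :: real^'n^'n)"
  unfolding norm2_def by (rule onorm_pos_le[OF matrix_vector_mul_bounded_linear])

lemma norm_matrix_vector_le_norm2: "norm (A *v x) \<le> norm2 (A :: real^'n^'n) * norm x"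
  unfolding norm2_def by (rule onorm[OF matrix_vector_mul_bounded_linear])

lemma abs_quadform_le_norm2:
  fixes A :: "real^'n^'n"
  shows "\<bar>x \<bullet> (A *v x)\<bar> \<le> norm2 A * (x \<bullet> x)"
proof -
  have "\<bar>x \<bullet> (A *v x)\<bar> \<le> norm x * norm (A *v x)" by (rule Cauchy_Schwarz_ineq2)
  also have "\<dots> \<le> norm x * (norm2 A * norm x)"
    by (intro mult_left_mono norm_matrix_vector_le_norm2) simp
  finally show ?thesis by (simp add: dot_square_norm power2_eq_square mult_ac)
qed

lemma le_of_square_le_mult:
  fixes r C :: real
  assumes "r\<^sup>2 \<le> C * r" "0 \<le> r" "0 \<le> C"
  shows "r \<le> C"
proof (cases "r = 0")
  case False
  then have "r * r \<le> C * r" "0 < r" using assms by (simp_all add: power2_eq_square)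
  then show ?thesis by (simp add: mult_le_cancel_right)
qed (use assms in simp)

text \<open>Cauchy--Schwarz for the form of \<open>M\<close>, applied to \<open>M x\<close> and \<open>x\<close>, gives
  \<open>|M x|\<^sup>4 \<le> (M x\<bullet>M M x)(x\<bullet>M x) \<le> c\<^sup>2 |M x|\<^sup>2 |x|\<^sup>2\<close>.\<close>

lemma norm2_le_if_quadform_le:
  fixes M :: "real^'n^'n"
  assumes sym: "symmetric_matrix M" and psd: "\<And>x. 0 \<le> x \<bullet> (M *v x)"
    and le: "\<And>x. x \<bullet> (M *v x) \<le> c * (x \<bullet> x)" and c: "0 \<le> c"
  shows "norm2 M \<le> c"
  unfolding norm2_def
proof (rule onorm_le)
  fix x
  define y where "y = M *v x"
  have "(y \<bullet> y)\<^sup>2 \<le> (y \<bullet> (M *v y)) * (x \<bullet> (M *v x))"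
    using quadform_Cauchy_Schwarz[OF sym psd psd, of y x] by (simp add: y_def)
  also have "\<dots> \<le> (c * (y \<bullet> y)) * (c * (x \<bullet> x))"
    using c by (intro mult_mono le psd) simp_all
  finally have "(y \<bullet> y)\<^sup>2 \<le> (c * c * (x \<bullet> x)) * (y \<bullet> y)" by (simp only: mult_ac)
  then have "y \<bullet> y \<le> c * c * (x \<bullet> x)"
    by (rule le_of_square_le_mult) (use c in simp_all)
  then have "(norm y)\<^sup>2 \<le> (c * norm x)\<^sup>2"
    by (simp add: dot_square_norm power_mult_distrib power2_eq_square mult_ac)
  then have "norm y \<le> c * norm x"
    by (rule power2_le_imp_le) (use c in simp)
  then show "norm (M *v x) \<le> c * norm x" by (simp add: y_def)
qed

lemma matrix_mul_matrix_inv: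
  fixes A :: "real^'n^'n"
  assumes "invertible A"
  shows "A ** matrix_inv A = mat 1" and "matrix_inv A ** A = mat 1"
proof -
  have "\<exists>A'. A ** A' = mat 1 \<and> A' ** A = mat 1" using assms by (simp add: invertible_def)
  then have "A ** matrix_inv A = mat 1 \<and> matrix_inv A ** A = mat 1"
    unfolding matrix_inv_def by (rule someI_ex)
  then show "A ** matrix_inv A = mat 1" "matrix_inv A ** A = mat 1" by auto
qed

lemma matrix_vector_matrix_inv:
  fixes A :: "real^'n^'n"
  assumes "invertible A"
  shows "A *v (matrix_inv A *v x) = x"
  using matrix_mul_matrix_inv(1)[OF assms] by (simp add: matrix_vector_mul_assoc)

lemma invertible_matrix_inv:
  fixes A :: "real^'n^'n"
  assumes "invertible A"
  shows "invertible (matrix_inv A)"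
  using matrix_mul_matrix_inv[OF assms] by (auto simp: invertible_def)

lemma symmetric_matrix_inv:
  fixes A :: "real^'n^'n"
  assumes sym: "symmetric_matrix A" and inv: "invertible A"
  shows "symmetric_matrix (matrix_inv A)"
proof -
  have A: "transpose A = A" using sym by (simp add: symmetric_matrix_def)
  have left_inv: "transpose (matrix_inv A) ** A = mat 1"
  proof -
    have "transpose (matrix_inv A) ** A = transpose (A ** matrix_inv A)"
      using A by (simp add: matrix_transpose_mul)
    then show ?thesis by (simp add: matrix_mul_matrix_inv(1)[OF inv])
  qed
  have "transpose (matrix_inv A) = transpose (matrix_inv A) ** (A ** matrix_inv A)"
    by (simp add: matrix_mul_matrix_inv(1)[OF inv] matrix_mul_rid)
  also have "\<dots> = matrix_inv A"
    using left_inv by (simp add: matrix_mul_assoc matrix_mul_lid)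
  finally show ?thesis by (simp add: symmetric_matrix_def)
qed

lemma spd_invertible:
  fixes A :: "real^'n^'n"
  assumes "spd A"
  shows "invertible A"
proof -
  have "x = 0" if "A *v x = 0" for x
    using spd_quadform_pos[OF assms, of x] that by (cases "x = 0") auto
  then show ?thesis by (simp add: invertible_left_inverse matrix_left_invertible_ker)
qed

lemma norm2_matrix_inv_le:
  fixes M :: "real^'n^'n"
  assumes inv: "invertible M" and ge: "\<And>x. x \<bullet> x \<le> b * (x \<bullet> (M *v x))" and b: "0 \<le> b"
  shows "norm2 (matrix_inv M) \<le> b"
  unfolding norm2_def
proof (rule onorm_le)
  fix y
  define x where "x = matrix_inv M *v y"
  have "M *v x = y" unfolding x_def by (rule matrix_vector_matrix_inv[OF inv])
  then have "(norm x)\<^sup>2 \<le> b * norm x * norm y"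
    using ge[of x] mult_left_mono[OF norm_cauchy_schwarz[of x y] b]
    by (simp add: dot_square_norm mult_ac)
  then show "norm (matrix_inv M *v y) \<le> b * norm y"
    unfolding x_def[symmetric] using b by (simp add: le_of_square_le_mult mult_ac)
qed

section \<open>Spectral theorem\<close>

definition orthonormal_basis :: "(real^'n) set \<Rightarrow> bool" where
  "orthonormal_basis F \<longleftrightarrow>
     finite F \<and> pairwise orthogonal F \<and> (\<forall>v\<in>F. norm v = 1) \<and> span F = UNIV"

lemma inner_orthonormal_sum:
  assumes F: "orthonormal_basis F" and u: "u \<in> F"
  shows "u \<bullet> (\<Sum>v\<in>F. c v *\<^sub>R v) = c u"
proof -
  have "u \<bullet> (\<Sum>v\<in>F. c v *\<^sub>R v) = c u * (u \<bullet> u) + (\<Sum>v\<in>F-{u}. c v * (u \<bullet> v))"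
    using F u by (simp add: orthonormal_basis_def inner_sum_right inner_add_right sum.remove)
  also have "(\<Sum>v\<in>F-{u}. c v * (u \<bullet> v)) = 0"
    using F u by (intro sum.neutral) (auto simp: orthonormal_basis_def pairwise_def orthogonal_def)
  also have "u \<bullet> u = 1" using F u by (simp add: orthonormal_basis_def dot_square_norm)
  finally show ?thesis by simp
qed

lemma orthonormal_basis_expansion:
  assumes F: "orthonormal_basis F"
  shows "x = (\<Sum>v\<in>F. (v \<bullet> x) *\<^sub>R v)"
proof -
  define r where "r = x - (\<Sum>v\<in>F. (v \<bullet> x) *\<^sub>R v)"
  have "orthogonal r y" if "y \<in> F" for y
    using inner_orthonormal_sum[OF F that, of "\<lambda>v. v \<bullet> x"]
    by (simp add: r_def orthogonal_def inner_diff_right inner_commute)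
  moreover have "r \<in> span F" using F by (simp add: orthonormal_basis_def)
  ultimately have "orthogonal r r" by (blast intro: orthogonal_to_span)
  then show ?thesis by (simp add: r_def orthogonal_def)
qed

lemma Rayleigh_quotient_attains_max:
  fixes A :: "real^'n^'n"
  assumes V: "subspace V" "V \<noteq> {0}"
  shows "\<exists>v\<in>V. norm v = 1 \<and> (\<forall>x\<in>V. x \<bullet> (A *v x) \<le> (v \<bullet> (A *v v)) * (x \<bullet> x))"
proof -
  let ?K = "sphere 0 1 \<inter> V"
  obtain x0 where x0: "x0 \<in> V" "x0 \<noteq> 0" using V subspace_0 by blast
  have "(1 / norm x0) *\<^sub>R x0 \<in> ?K" using x0 V by (simp add: subspace_scale)
  moreover have "compact ?K" using V by (intro compact_Int_closed compact_sphere closed_subspace)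
  moreover have "continuous_on ?K (\<lambda>x. x \<bullet> (A *v x))"
    by (intro continuous_intros linear_continuous_on matrix_vector_mul_bounded_linear)
  ultimately obtain v where v: "v \<in> ?K" and max: "\<And>y. y \<in> ?K \<Longrightarrow> y \<bullet> (A *v y) \<le> v \<bullet> (A *v v)"
    using continuous_attains_sup[of ?K] by blast
  have "x \<bullet> (A *v x) \<le> (v \<bullet> (A *v v)) * (x \<bullet> x)" if x: "x \<in> V" for x
  proof (cases "x = 0")
    case False
    let ?y = "(1 / norm x) *\<^sub>R x"
    have "?y \<in> ?K" using x False V by (simp add: subspace_scale)
    then have "?y \<bullet> (A *v ?y) \<le> v \<bullet> (A *v v)" by (rule max)
    moreover have "?y \<bullet> (A *v ?y) = (x \<bullet> (A *v x)) / (x \<bullet> x)"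
      by (simp add: matrix_vector_mult_scaleR dot_square_norm power2_eq_square)
    ultimately have "(x \<bullet> (A *v x)) / (x \<bullet> x) \<le> v \<bullet> (A *v v)" by linarith
    then show ?thesis using False by (simp add: pos_divide_le_eq)
  qed simp
  with v show ?thesis by auto
qed

text \<open>The form \<open>x \<mapsto> l |x|\<^sup>2 - x\<bullet>A x\<close> is nonnegative on \<open>V\<close> and vanishes at \<open>v\<close>, so by
  Cauchy--Schwarz its polar form vanishes at \<open>v\<close> too, which kills \<open>A v - l v\<close>.\<close>

lemma Rayleigh_maximizer_eigenvector:
  fixes A :: "real^'n^'n"
  assumes sym: "symmetric_matrix A" and V: "subspace V" and inv: "\<forall>x\<in>V. A *v x \<in> V"
    and v: "v \<in> V" "norm v = 1"
    and max: "\<forall>x\<in>V. x \<bullet> (A *v x) \<le> (v \<bullet> (A *v v)) * (x \<bullet> x)"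
  shows "A *v v = (v \<bullet> (A *v v)) *\<^sub>R v"
proof -
  define l where "l = v \<bullet> (A *v v)"
  define M where "M = l *\<^sub>R mat 1 - A"
  define w where "w = A *v v - l *\<^sub>R v"
  have Mx: "x \<bullet> (M *v x) = l * (x \<bullet> x) - x \<bullet> (A *v x)" for x
    by (simp add: M_def matrix_vector_mult_diff_rdistrib scaleR_matrix_vector_assoc[symmetric]
        inner_diff_right)
  have symM: "symmetric_matrix M"
    using sym by (simp add: M_def symmetric_matrix_def transpose_def vec_eq_iff mat_def)
  have vv: "v \<bullet> v = 1" using v by (simp add: dot_square_norm)
  have wV: "w \<in> V" using inv v V by (simp add: w_def subspace_diff subspace_scale)
  have "(v \<bullet> (M *v w))\<^sup>2 \<le> (v \<bullet> (M *v v)) * (w \<bullet> (M *v w))"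
  proof (rule quadform_Cauchy_Schwarz[OF symM])
    show "0 \<le> (v + t *\<^sub>R w) \<bullet> (M *v (v + t *\<^sub>R w))" for t
      using max V v wV by (simp add: Mx l_def subspace_add subspace_scale)
    show "0 \<le> w \<bullet> (M *v w)" using max wV by (simp add: Mx l_def)
  qed
  moreover have "v \<bullet> (M *v v) = 0" using vv by (simp add: Mx l_def)
  moreover have "v \<bullet> (M *v w) = - (w \<bullet> w)"
  proof -
    have Mw: "M *v w = l *\<^sub>R w - A *v w"
      by (simp add: M_def matrix_vector_mult_diff_rdistrib scaleR_matrix_vector_assoc[symmetric])
    have vw: "v \<bullet> w = 0" using vv by (simp add: w_def l_def inner_diff_right)
    have "v \<bullet> (A *v w) = (w + l *\<^sub>R v) \<bullet> w"
      using symmetric_matrix_inner[OF sym, of v w] by (simp add: w_def)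
    also have "\<dots> = w \<bullet> w + l * (v \<bullet> w)" by (simp add: inner_add_left)
    also have "\<dots> = w \<bullet> w" using vw by simp
    finally show ?thesis using vw by (simp add: Mw inner_diff_right)
  qed
  ultimately have "w = 0" by simp
  then show ?thesis by (simp add: w_def l_def)
qed

lemma symmetric_matrix_has_unit_eigenvector:
  fixes A :: "real^'n^'n"
  assumes "symmetric_matrix A" "subspace V" "V \<noteq> {0}" "\<forall>x\<in>V. A *v x \<in> V"
  shows "\<exists>v\<in>V. norm v = 1 \<and> A *v v = (v \<bullet> (A *v v)) *\<^sub>R v"
  using Rayleigh_quotient_attains_max[of V A] Rayleigh_maximizer_eigenvector[of A V] assms
  by blast

lemma invariant_orthogonal_complement:
  fixes A :: "real^'n^'n"
  assumes sym: "symmetric_matrix A" and eig: "A *v v = c *\<^sub>R v" and inv: "\<forall>x\<in>V. A *v x \<in> V"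
  shows "\<forall>x\<in>V \<inter> {y. orthogonal v y}. A *v x \<in> V \<inter> {y. orthogonal v y}"
proof
  fix x assume x: "x \<in> V \<inter> {y. orthogonal v y}"
  have "v \<bullet> (A *v x) = c * (v \<bullet> x)"
    using symmetric_matrix_inner[OF sym, of v x] by (simp add: eig)
  then show "A *v x \<in> V \<inter> {y. orthogonal v y}" using x inv by (auto simp: orthogonal_def)
qed

lemma subset_span_insert_orthogonal:
  assumes V: "subspace V" and v: "v \<in> V" "v \<bullet> v = 1"
    and F: "V \<inter> {y. orthogonal v y} \<subseteq> span F"
  shows "V \<subseteq> span (insert v F)"
proof
  fix x assume x: "x \<in> V"
  have "x - (v \<bullet> x) *\<^sub>R v \<in> V \<inter> {y. orthogonal v y}"
    using x v V by (auto simp: orthogonal_def subspace_diff subspace_scale inner_diff_right)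
  then have "x - (v \<bullet> x) *\<^sub>R v \<in> span (insert v F)"
    using F span_mono[of F "insert v F"] by blast
  moreover have "(v \<bullet> x) *\<^sub>R v \<in> span (insert v F)" by (simp add: span_base span_mul)
  ultimately have "x - (v \<bullet> x) *\<^sub>R v + (v \<bullet> x) *\<^sub>R v \<in> span (insert v F)"
    by (rule span_add)
  then show "x \<in> span (insert v F)" by simp
qed

lemma symmetric_matrix_eigenbasis_subspace:
  fixes A :: "real^'n^'n"
  assumes sym: "symmetric_matrix A"
  shows "subspace V \<Longrightarrow> \<forall>x\<in>V. A *v x \<in> V \<Longrightarrow>
    \<exists>F. finite F \<and> F \<subseteq> V \<and> pairwise orthogonal F \<and> V \<subseteq> span F
      \<and> (\<forall>v\<in>F. norm v = 1 \<and> A *v v = (v \<bullet> (A *v v)) *\<^sub>R v)"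
proof (induction "dim V" arbitrary: V rule: less_induct)
  case less
  show ?case
  proof (cases "V = {0}")
    case True
    then show ?thesis by (intro exI[of _ "{}"]) auto
  next
    case False
    obtain v where v: "v \<in> V" "norm v = 1" "A *v v = (v \<bullet> (A *v v)) *\<^sub>R v"
      using symmetric_matrix_has_unit_eigenvector[OF sym less.prems(1) False less.prems(2)] by blast
    have vv: "v \<bullet> v = 1" using v(2) by (simp add: dot_square_norm)
    define W where "W = V \<inter> {y. orthogonal v y}"
    have W: "subspace W"
      unfolding W_def by (rule subspace_inter[OF less.prems(1) subspace_orthogonal_to_vector])
    have invW: "\<forall>x\<in>W. A *v x \<in> W"
      unfolding W_def by (rule invariant_orthogonal_complement[OF sym v(3) less.prems(2)])
    have "dim W < dim V"
    proof (rule dim_psubset)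
      have "v \<notin> W" using vv by (simp add: W_def orthogonal_def)
      then have "W \<subset> V" using v(1) by (auto simp: W_def)
      then show "span W \<subset> span V" using W less.prems(1) by (metis span_eq_iff)
    qed
    from less.hyps[OF this W invW] obtain F where F: "finite F" "F \<subseteq> W"
      "pairwise orthogonal F" "W \<subseteq> span F"
      "\<forall>v\<in>F. norm v = 1 \<and> A *v v = (v \<bullet> (A *v v)) *\<^sub>R v"
      by blast
    have "V \<subseteq> span (insert v F)"
      using F(4) unfolding W_def by (rule subset_span_insert_orthogonal[OF less.prems(1) v(1) vv])
    moreover have "pairwise orthogonal (insert v F)"
      using F(2,3) by (auto simp: pairwise_insert W_def orthogonal_commute)
    moreover have "insert v F \<subseteq> V" using F(2) v(1) by (auto simp: W_def)
    ultimately show ?thesis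
      using F(1,5) v(2,3) by (intro exI[of _ "insert v F"]) blast
  qed
qed

lemma symmetric_matrix_eigenbasis:
  fixes A :: "real^'n^'n"
  assumes "symmetric_matrix A"
  obtains F where "orthonormal_basis F" "\<And>v. v \<in> F \<Longrightarrow> A *v v = (v \<bullet> (A *v v)) *\<^sub>R v"
proof -
  obtain F where "finite F" "pairwise orthogonal F" "UNIV \<subseteq> span F"
      "\<forall>v\<in>F. norm v = 1 \<and> A *v v = (v \<bullet> (A *v v)) *\<^sub>R v"
    using symmetric_matrix_eigenbasis_subspace[OF assms subspace_UNIV] by blast
  moreover from this(3) have "span F = UNIV" by blast
  ultimately show thesis by (intro that[of F]) (auto simp only: orthonormal_basis_def)
qed

section \<open>Square roots\<close>

definition outer_sum :: "(real^'n \<Rightarrow> real) \<Rightarrow> (real^'n) set \<Rightarrow> real^'n^'n" where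
  "outer_sum s F = (\<chi> i j. \<Sum>v\<in>F. s v * (v$i * v$j))"

lemma outer_sum_mult_vector: "outer_sum s F *v x = (\<Sum>v\<in>F. (s v * (v \<bullet> x)) *\<^sub>R v)"
proof -
  have "(outer_sum s F *v x)$i = (\<Sum>v\<in>F. (s v * (v \<bullet> x)) *\<^sub>R v)$i" for i
  proof -
    have "(outer_sum s F *v x)$i = (\<Sum>j\<in>UNIV. \<Sum>v\<in>F. s v * (v$i * v$j) * x$j)"
      by (simp add: outer_sum_def matrix_vector_mult_def sum_distrib_right)
    also have "\<dots> = (\<Sum>v\<in>F. \<Sum>j\<in>UNIV. s v * (v$i * v$j) * x$j)"
      by (rule sum.swap)
    also have "\<dots> = (\<Sum>v\<in>F. (s v * (v \<bullet> x)) *\<^sub>R v)$i"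
      by (simp add: inner_vec_def sum_distrib_left sum_component mult_ac)
    finally show ?thesis .
  qed
  then show ?thesis by (simp add: vec_eq_iff)
qed

lemma symmetric_matrix_outer_sum: "symmetric_matrix (outer_sum s F)"
  by (simp add: symmetric_matrix_def outer_sum_def transpose_def vec_eq_iff mult.commute)

lemma outer_sum_eigenbasis:
  fixes A :: "real^'n^'n"
  assumes F: "orthonormal_basis F" and eig: "\<And>v. v \<in> F \<Longrightarrow> A *v v = (v \<bullet> (A *v v)) *\<^sub>R v"
  shows "A = outer_sum (\<lambda>v. v \<bullet> (A *v v)) F"
proof (subst matrix_eq, intro allI)
  fix x
  have "A *v x = A *v (\<Sum>v\<in>F. (v \<bullet> x) *\<^sub>R v)"
    using orthonormal_basis_expansion[OF F] by metis
  also have "\<dots> = (\<Sum>v\<in>F. (v \<bullet> x) *\<^sub>R (A *v v))"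
    by (simp add: vec.sum matrix_vector_mult_scaleR)
  also have "\<dots> = (\<Sum>v\<in>F. ((v \<bullet> (A *v v)) * (v \<bullet> x)) *\<^sub>R v)"
    by (intro sum.cong refl) (subst eig, simp_all add: mult.commute)
  finally show "A *v x = outer_sum (\<lambda>v. v \<bullet> (A *v v)) F *v x"
    by (simp add: outer_sum_mult_vector)
qed

lemma outer_sum_mult:
  assumes F: "orthonormal_basis F"
  shows "outer_sum s F ** outer_sum t F = outer_sum (\<lambda>v. s v * t v) F"
proof (subst matrix_eq, intro allI)
  fix x
  have coeff: "v \<bullet> (outer_sum t F *v x) = t v * (v \<bullet> x)" if "v \<in> F" for v
    unfolding outer_sum_mult_vector by (rule inner_orthonormal_sum[OF F that])
  have "outer_sum s F ** outer_sum t F *v x = outer_sum s F *v (outer_sum t F *v x)"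
    by (simp add: matrix_vector_mul_assoc)
  also have "\<dots> = (\<Sum>v\<in>F. (s v * (v \<bullet> (outer_sum t F *v x))) *\<^sub>R v)"
    by (rule outer_sum_mult_vector)
  also have "\<dots> = outer_sum (\<lambda>v. s v * t v) F *v x"
    using coeff by (simp add: outer_sum_mult_vector mult.assoc cong: sum.cong)
  finally show "outer_sum s F ** outer_sum t F *v x = outer_sum (\<lambda>v. s v * t v) F *v x" .
qed

lemma spd_outer_sum:
  fixes F :: "(real^'n) set"
  assumes F: "orthonormal_basis F" and pos: "\<And>v. v \<in> F \<Longrightarrow> 0 < s v"
  shows "spd (outer_sum s F)"
  unfolding spd_def
proof (intro conjI symmetric_matrix_outer_sum allI impI)
  fix x :: "real^'n" assume "x \<noteq> 0"
  then obtain u where u: "u \<in> F" "u \<bullet> x \<noteq> 0"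
    using orthonormal_basis_expansion[OF F, of x] by (metis (no_types, lifting) scale_eq_0_iff sum.neutral)
  have "x \<bullet> (outer_sum s F *v x) = (\<Sum>v\<in>F. s v * (v \<bullet> x)\<^sup>2)"
    by (simp add: outer_sum_mult_vector inner_sum_right inner_commute power2_eq_square mult_ac)
  also have "\<dots> > 0"
    using F u pos by (intro sum_pos2[of F u]) (auto simp: orthonormal_basis_def less_imp_le)
  finally show "0 < x \<bullet> (outer_sum s F *v x)" .
qed

lemma matrix_eq_on_orthonormal_basis:
  fixes S T :: "real^'n^'n"
  assumes F: "orthonormal_basis F" and eq: "\<And>v. v \<in> F \<Longrightarrow> S *v v = T *v v"
  shows "S = T"
proof (subst matrix_eq, intro allI)
  fix x
  have "x \<in> span F" using F by (simp add: orthonormal_basis_def)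
  then show "S *v x = T *v x"
    using linear_eq_on_span[OF matrix_vector_mul_linear matrix_vector_mul_linear] eq by blast
qed

lemma spd_square_root_exists:
  fixes B :: "real^'n^'n"
  assumes B: "spd B"
  shows "\<exists>S. spd S \<and> S ** S = B"
proof -
  obtain F where F: "orthonormal_basis F" and eig: "\<And>v. v \<in> F \<Longrightarrow> B *v v = (v \<bullet> (B *v v)) *\<^sub>R v"
    using symmetric_matrix_eigenbasis[OF spd_symmetric[OF B]] by blast
  have pos: "0 < v \<bullet> (B *v v)" if "v \<in> F" for v
  proof -
    have "v \<noteq> 0" using F that by (auto simp: orthonormal_basis_def)
    then show ?thesis by (rule spd_quadform_pos[OF B])
  qed
  define S where "S = outer_sum (\<lambda>v. sqrt (v \<bullet> (B *v v))) F"
  have "S ** S = outer_sum (\<lambda>v. v \<bullet> (B *v v)) F"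
    unfolding S_def outer_sum_mult[OF F] using pos
    by (simp add: outer_sum_def less_imp_le cong: sum.cong)
  also have "\<dots> = B" using outer_sum_eigenbasis[OF F eig] by simp
  finally have "S ** S = B" .
  moreover have "spd S" unfolding S_def using pos by (intro spd_outer_sum[OF F]) simp
  ultimately show ?thesis by blast
qed

text \<open>If \<open>T w = m w\<close> and \<open>S\<^sup>2 = T\<^sup>2\<close>, then \<open>S w - m w\<close> is an eigenvector of \<open>S\<close> for the
  eigenvalue \<open>-m < 0\<close>, so it vanishes when \<open>S\<close> is positive definite.\<close>

lemma spd_square_root_unique:
  fixes S T :: "real^'n^'n"
  assumes S: "spd S" and T: "spd T" and eq: "S ** S = T ** T"
  shows "S = T"
proof -
  obtain F where F: "orthonormal_basis F" and eig: "\<And>v. v \<in> F \<Longrightarrow> T *v v = (v \<bullet> (T *v v)) *\<^sub>R v"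
    using symmetric_matrix_eigenbasis[OF spd_symmetric[OF T]] by blast
  show ?thesis
  proof (rule matrix_eq_on_orthonormal_basis[OF F])
    fix w assume w: "w \<in> F"
    define m where "m = w \<bullet> (T *v w)"
    have "w \<noteq> 0" using F w by (auto simp: orthonormal_basis_def)
    then have m: "0 < m" using spd_quadform_pos[OF T] by (simp add: m_def)
    have Tw: "T *v w = m *\<^sub>R w" unfolding m_def by (rule eig[OF w])
    define y where "y = S *v w - m *\<^sub>R w"
    have "S *v (S *v w) = T *v (T *v w)" by (simp add: matrix_vector_mul_assoc eq)
    then have "S *v y = (- m) *\<^sub>R y"
      by (simp add: y_def Tw matrix_vector_mult_diff_distrib matrix_vector_mult_scaleR algebra_simps)
    then have "y \<bullet> (S *v y) = - m * (y \<bullet> y)" by simp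
    moreover have "0 \<le> y \<bullet> (S *v y)" by (rule spd_quadform_nonneg[OF S])
    ultimately have "y \<bullet> y \<le> 0" using m by (simp add: mult_le_0_iff)
    then have "y = 0" by (metis inner_ge_zero inner_eq_zero_iff order_antisym)
    then show "S *v w = T *v w" by (simp add: y_def Tw)
  qed
qed

lemma spd_mat_sqrt:
  fixes X :: "real^'n^'n"
  assumes "spd X"
  shows "spd (mat_sqrt X)" and "mat_sqrt X ** mat_sqrt X = X"
proof -
  have "\<exists>!S. spd S \<and> S ** S = X"
    using spd_square_root_exists[OF assms] spd_square_root_unique by metis
  then have "spd (mat_sqrt X) \<and> mat_sqrt X ** mat_sqrt X = X"
    unfolding mat_sqrt_def by (rule theI')
  then show "spd (mat_sqrt X)" "mat_sqrt X ** mat_sqrt X = X" by auto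
qed

lemma spd_mat_inv_sqrt:
  fixes B :: "real^'n^'n"
  assumes B: "spd B"
  shows "symmetric_matrix (mat_inv_sqrt B)" and "invertible (mat_inv_sqrt B)"
    and "(mat_inv_sqrt B *v x) \<bullet> (B *v (mat_inv_sqrt B *v x)) = x \<bullet> x"
proof -
  define S where "S = mat_sqrt B"
  have S: "spd S" "S ** S = B" unfolding S_def using spd_mat_sqrt[OF B] by simp_all
  have symS: "symmetric_matrix S" and invS: "invertible S"
    using S(1) by (simp_all add: spd_symmetric spd_invertible)
  have R: "mat_inv_sqrt B = matrix_inv S" by (simp add: S_def mat_inv_sqrt_def)
  show "symmetric_matrix (mat_inv_sqrt B)" unfolding R by (rule symmetric_matrix_inv[OF symS invS])
  show "invertible (mat_inv_sqrt B)" unfolding R by (rule invertible_matrix_inv[OF invS])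
  have SR: "S *v (matrix_inv S *v x) = x" by (rule matrix_vector_matrix_inv[OF invS])
  have "(matrix_inv S *v x) \<bullet> (B *v (matrix_inv S *v x))
      = (matrix_inv S *v x) \<bullet> (S *v (S *v (matrix_inv S *v x)))"
    by (simp add: S(2)[symmetric] matrix_vector_mul_assoc matrix_mul_assoc)
  also have "\<dots> = x \<bullet> x" by (simp add: symmetric_matrix_inner[OF symS] SR)
  finally show "(mat_inv_sqrt B *v x) \<bullet> (B *v (mat_inv_sqrt B *v x)) = x \<bullet> x"
    unfolding R .
qed

section \<open>Perturbation bound and condition number\<close>

text \<open>With \<open>y = P x\<close> and \<open>u = A\<^sup>-\<^sup>1 y\<close> one has \<open>|y|\<^sup>2 = x\<bullet>A u\<close>, and
  Cauchy--Schwarz in the \<open>A\<close>-inner product bounds this by \<open>(x\<bullet>A x)(y\<bullet>A\<^sup>-\<^sup>1 y)\<close>.\<close>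

lemma proj_inner_le_quadform:
  fixes A P :: "real^'n^'n"
  assumes A: "spd A" and P: "orth_proj P"
  shows "(P *v x) \<bullet> (P *v x) \<le> norm2 (P ** matrix_inv A ** P) * (x \<bullet> (A *v x))"
proof -
  have symP: "symmetric_matrix P" using P by (rule orth_proj_symmetric)
  have PP: "P ** P = P" using P by (simp add: orth_proj_def)
  define N where "N = P ** matrix_inv A ** P"
  define y where "y = P *v x"
  define u where "u = matrix_inv A *v y"
  have Py: "P *v y = y" by (simp add: y_def matrix_vector_mul_assoc PP)
  have Au: "A *v u = y" unfolding u_def by (rule matrix_vector_matrix_inv[OF spd_invertible[OF A]])
  have "x \<bullet> (A *v u) = x \<bullet> (P *v y)" by (simp add: Au Py)
  also have "\<dots> = y \<bullet> y" by (simp add: symmetric_matrix_inner[OF symP] y_def)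
  finally have xAu: "x \<bullet> (A *v u) = y \<bullet> y" .
  have "u \<bullet> (A *v u) = y \<bullet> (matrix_inv A *v (P *v y))"
    unfolding Au Py by (simp add: u_def inner_commute)
  also have "\<dots> = y \<bullet> (N *v y)"
    using symmetric_matrix_inner[OF symP, of y] Py
    by (simp add: N_def matrix_vector_mul_assoc[symmetric])
  also have "\<dots> \<le> norm2 N * (y \<bullet> y)" using abs_quadform_le_norm2[of y N] by linarith
  finally have uAu: "u \<bullet> (A *v u) \<le> norm2 N * (y \<bullet> y)" .
  have "(y \<bullet> y)\<^sup>2 \<le> (x \<bullet> (A *v x)) * (u \<bullet> (A *v u))"
    using spd_Cauchy_Schwarz[OF A, of x u] by (simp add: xAu)
  also have "\<dots> \<le> (norm2 N * (x \<bullet> (A *v x))) * (y \<bullet> y)"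
    using mult_left_mono[OF uAu spd_quadform_nonneg[OF A, of x]] by (simp add: mult_ac)
  finally have "y \<bullet> y \<le> norm2 N * (x \<bullet> (A *v x))"
    by (rule le_of_square_le_mult) (simp_all add: norm2_nonneg spd_quadform_nonneg[OF A])
  then show ?thesis by (simp add: y_def N_def)
qed

lemma abs_quadform_proj_sandwich_le:
  fixes A P E :: "real^'n^'n"
  assumes A: "spd A" and P: "orth_proj P"
  shows "\<bar>x \<bullet> ((P ** E ** P) *v x)\<bar> \<le> norm2 E * norm2 (P ** matrix_inv A ** P) * (x \<bullet> (A *v x))"
proof -
  have symP: "symmetric_matrix P" using P by (rule orth_proj_symmetric)
  have "x \<bullet> ((P ** E ** P) *v x) = (P *v x) \<bullet> (E *v (P *v x))"
    by (rule quadform_sandwich[OF symP])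
  also have "\<bar>\<dots>\<bar> \<le> norm2 E * ((P *v x) \<bullet> (P *v x))" by (rule abs_quadform_le_norm2)
  also have "\<dots> \<le> norm2 E * (norm2 (P ** matrix_inv A ** P) * (x \<bullet> (A *v x)))"
    by (intro mult_left_mono proj_inner_le_quadform[OF A P] norm2_nonneg)
  finally show ?thesis by (simp add: mult.assoc)
qed

lemma abs_quadform_sum_proj_sandwich_le:
  fixes A :: "real^'n^'n" and P E :: "'a \<Rightarrow> real^'n^'n"
  assumes A: "spd A" and P: "\<And>k. k \<in> K \<Longrightarrow> orth_proj (P k)"
  shows "\<bar>x \<bullet> ((\<Sum>k\<in>K. P k ** E k ** P k) *v x)\<bar>
    \<le> (\<Sum>k\<in>K. norm2 (E k) * norm2 (P k ** matrix_inv A ** P k)) * (x \<bullet> (A *v x))"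
proof -
  have "\<bar>x \<bullet> ((\<Sum>k\<in>K. P k ** E k ** P k) *v x)\<bar> = \<bar>\<Sum>k\<in>K. x \<bullet> ((P k ** E k ** P k) *v x)\<bar>"
    by (simp add: sum_matrix_vector_mult inner_sum_right)
  also have "\<dots> \<le> (\<Sum>k\<in>K. \<bar>x \<bullet> ((P k ** E k ** P k) *v x)\<bar>)" by (rule sum_abs)
  also have "\<dots> \<le> (\<Sum>k\<in>K. norm2 (E k) * norm2 (P k ** matrix_inv A ** P k) * (x \<bullet> (A *v x)))"
    by (intro sum_mono abs_quadform_proj_sandwich_le[OF A P])
  finally show ?thesis by (simp add: sum_distrib_right)
qed

lemma cond2_inv_sqrt_sandwich_le:
  fixes A B :: "real^'n^'n"
  assumes A: "spd A" and B: "spd B" and a: "0 < a"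
    and lower: "\<And>x. a * (x \<bullet> (A *v x)) \<le> x \<bullet> (B *v x)"
    and upper: "\<And>x. x \<bullet> (B *v x) \<le> b * (x \<bullet> (A *v x))"
  shows "cond2 (mat_inv_sqrt B ** A ** mat_inv_sqrt B) \<le> b / a"
proof -
  define R where "R = mat_inv_sqrt B"
  define M where "M = R ** A ** R"
  have RAR: "x \<bullet> (M *v x) = (R *v x) \<bullet> (A *v (R *v x))" for x
    unfolding M_def R_def by (rule quadform_sandwich[OF spd_mat_inv_sqrt(1)[OF B]])
  have M_upper: "x \<bullet> (M *v x) \<le> 1 / a * (x \<bullet> x)" for x
    using lower[of "R *v x"] a
    by (simp add: RAR R_def spd_mat_inv_sqrt(3)[OF B] field_simps mult.commute)
  have M_lower: "x \<bullet> x \<le> b * (x \<bullet> (M *v x))" for x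
    using upper[of "R *v x"] by (simp add: RAR R_def spd_mat_inv_sqrt(3)[OF B])
  have M_psd: "0 \<le> x \<bullet> (M *v x)" for x
    unfolding RAR by (rule spd_quadform_nonneg[OF A])
  have "0 \<le> b"
  proof -
    define e :: "real^'n" where "e = axis undefined 1"
    have "0 < e \<bullet> (A *v e)" by (rule spd_quadform_pos[OF A]) (simp add: e_def)
    then have "a \<le> b" using order_trans[OF lower upper, of e] by simp
    then show ?thesis using a by simp
  qed
  have symM: "symmetric_matrix M"
    using spd_mat_inv_sqrt(1)[OF B] spd_symmetric[OF A]
    by (simp add: M_def R_def symmetric_matrix_def matrix_transpose_mul matrix_mul_assoc)
  have invM: "invertible M"
    unfolding M_def R_def by (intro invertible_mult spd_mat_inv_sqrt(2)[OF B] spd_invertible[OF A])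
  have "norm2 M \<le> 1 / a"
    using a by (intro norm2_le_if_quadform_le[OF symM M_psd M_upper]) simp
  moreover have "norm2 (matrix_inv M) \<le> b"
    by (rule norm2_matrix_inv_le[OF invM M_lower \<open>0 \<le> b\<close>])
  ultimately have "cond2 M \<le> 1 / a * b"
    unfolding cond2_def using a by (intro mult_mono norm2_nonneg) simp_all
  then show ?thesis by (simp add: M_def R_def)
qed

theorem mainTheorem3:
  fixes A :: "real^'n^'n" and E P :: "nat \<Rightarrow> real^'n^'n" and l :: nat and \<mu> :: real
  assumes "spd A"
    and "\<And>k. k \<in> {1..l} \<Longrightarrow> symmetric_matrix (E k)"
    and "\<And>k. k \<in> {1..l} \<Longrightarrow> orth_proj (P k)"
    and "(\<Sum>k=1..l. norm2 (E k) * norm2 (P k ** matrix_inv A ** P k)) \<le> \<mu>"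
    and "\<mu> < 1"
  shows "spd (A + (\<Sum>k=1..l. P k ** E k ** P k))
    \<and> cond2 (mat_inv_sqrt (A + (\<Sum>k=1..l. P k ** E k ** P k)) ** A
              ** mat_inv_sqrt (A + (\<Sum>k=1..l. P k ** E k ** P k)))
        \<le> (1 + \<mu>) / (1 - \<mu>)"
proof -
  define D where "D = (\<Sum>k=1..l. P k ** E k ** P k)"
  have D: "\<bar>x \<bullet> (D *v x)\<bar> \<le> \<mu> * (x \<bullet> (A *v x))" for x
    using abs_quadform_sum_proj_sandwich_le[where K = "{1..l}" and P = P and E = E and x = x,
        OF assms(1,3)]
      mult_right_mono[OF assms(4) spd_quadform_nonneg[OF assms(1), of x]]
    unfolding D_def by linarith
  have quad: "x \<bullet> ((A + D) *v x) = x \<bullet> (A *v x) + x \<bullet> (D *v x)" for x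
    by (simp add: matrix_vector_mult_add_rdistrib inner_add_right)
  have lower: "(1 - \<mu>) * (x \<bullet> (A *v x)) \<le> x \<bullet> ((A + D) *v x)"
    and upper: "x \<bullet> ((A + D) *v x) \<le> (1 + \<mu>) * (x \<bullet> (A *v x))" for x
    using D[of x] by (simp_all add: quad algebra_simps abs_le_iff)
  have "symmetric_matrix D"
    unfolding D_def using assms(2,3)
    by (intro symmetric_matrix_sum symmetric_matrix_sandwich) (auto intro: orth_proj_symmetric)
  then have "symmetric_matrix (A + D)" by (intro symmetric_matrix_add spd_symmetric[OF assms(1)])
  then have spd: "spd (A + D)"
    using assms(5) by (intro spd_if_quadform_ge[OF assms(1) _ _ lower]) simp_all
  moreover have "cond2 (mat_inv_sqrt (A + D) ** A ** mat_inv_sqrt (A + D)) \<le> (1 + \<mu>) / (1 - \<mu>)"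
    using assms(5) by (intro cond2_inv_sqrt_sandwich_le[OF assms(1) spd _ lower upper]) simp
  ultimately show ?thesis unfolding D_def ..
qed

end
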